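(* Let $\lambda$ be a regular uncountable cardinal, $\kappa<\lambda$, and let $\mathcal{C}$ be a coherent sequence of length $\lambda$ and width $<\kappa$. If $\mathcal{C}$ has a weak thread, then $\mathcal{C}$ has a thread.
   Context: For a set of ordinals $A$, $\mathrm{acc}(A)$ is the set of $\beta<\sup\{\alpha+1\mid\alpha\in A\}$ with $\beta=\sup(A\cap\beta)$. A coherent sequence of length $\lambda$ and width $<\eta$ is $\mathcal{C}=\langle\mathcal{C}_\alpha\mid\alpha<\lambda\rangle$ where each $\mathcal{C}_\alpha$ is a nonempty set of fewer than $\eta$ closed unbounded subsets of $\alpha$ (for successor $\alpha=\beta+1$, $\mathcal{C}_\alpha=\{\{\beta\}\}$), such that for all $\beta<\lambda$, $C\in\mathcal{C}_\beta$ and $\alpha\in\mathrm{acc}(C)$, $C\cap\alpha\in\mathcal{C}_\alpha$. A thread through $\mathcal{C}$ is a club $D\subseteq\lambda$ with $D\cap\alpha\in\mathcal{C}_\alpha$ for all $\alpha\in\mathrm{acc}(D)$. A weak thread through $\mathcal{C}$ is a club $E\subseteq\lambda$ such that for every $\alpha\in\mathrm{acc}(E)$ there is $C\in\mathcal{C}_\alpha$ with $E\cap\alpha\subseteq C$. *)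

theory Defs
  imports Main "HOL-Library.Equipollence" "HOL-Library.Countable_Set"
begin

text \<open>Ordinals below lambda are modelled as the elements of a well-ordered type 'a
  whose order type is lambda; the ordinal alpha is identified with the set of its predecessors.\<close>

definition is_sup :: "'a::wellorder set \<Rightarrow> 'a \<Rightarrow> bool" where
  "is_sup S b \<longleftrightarrow> (\<forall>x\<in>S. x \<le> b) \<and> (\<forall>y. (\<forall>x\<in>S. x \<le> y) \<longrightarrow> b \<le> y)"

definition acc :: "'a::wellorder set \<Rightarrow> 'a set" where
  "acc A = {b. (\<exists>a\<in>A. b \<le> a) \<and> is_sup (A \<inter> {..<b}) b}"

definition club_in :: "'a::wellorder set \<Rightarrow> 'a \<Rightarrow> bool" where
  "club_in C a \<longleftrightarrow> C \<subseteq> {..<a}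
     \<and> (\<forall>g<a. \<exists>c\<in>C. g \<le> c)
     \<and> (\<forall>b<a. C \<inter> {..<b} \<noteq> {} \<and> is_sup (C \<inter> {..<b}) b \<longrightarrow> b \<in> C)"

definition club :: "'a::wellorder set \<Rightarrow> bool" where
  "club D \<longleftrightarrow> (\<forall>g. \<exists>d\<in>D. g \<le> d)
     \<and> (\<forall>b. D \<inter> {..<b} \<noteq> {} \<and> is_sup (D \<inter> {..<b}) b \<longrightarrow> b \<in> D)"

definition is_successor_of :: "'a::wellorder \<Rightarrow> 'a \<Rightarrow> bool" where
  "is_successor_of a b \<longleftrightarrow> b < a \<and> (\<forall>g. b < g \<longrightarrow> a \<le> g)"

definition regular_uncountable_cardinal_type :: "'a::wellorder itself \<Rightarrow> bool" where
  "regular_uncountable_cardinal_type _ \<longleftrightarrow>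
     uncountable (UNIV :: 'a set)
     \<and> (\<forall>a::'a. {..<a} \<prec> (UNIV :: 'a set))
     \<and> (\<forall>X::'a set. (\<forall>g. \<exists>x\<in>X. g \<le> x) \<longrightarrow> X \<approx> (UNIV :: 'a set))"

definition is_cardinal :: "'a::wellorder \<Rightarrow> bool" where
  "is_cardinal k \<longleftrightarrow> (\<forall>g<k. {..<g} \<prec> {..<k})"

definition coherent_seq :: "('a::wellorder \<Rightarrow> 'a set set) \<Rightarrow> 'a \<Rightarrow> bool" where
  "coherent_seq CC k \<longleftrightarrow>
     (\<forall>a. CC a \<noteq> {} \<and> CC a \<prec> {..<k} \<and> (\<forall>C\<in>CC a. club_in C a))
     \<and> (\<forall>a b. is_successor_of a b \<longrightarrow> CC a = {{b}})
     \<and> (\<forall>b. \<forall>C\<in>CC b. \<forall>a\<in>acc C. C \<inter> {..<a} \<in> CC a)"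

definition is_thread :: "('a::wellorder \<Rightarrow> 'a set set) \<Rightarrow> 'a set \<Rightarrow> bool" where
  "is_thread CC D \<longleftrightarrow> club D \<and> (\<forall>a\<in>acc D. D \<inter> {..<a} \<in> CC a)"

definition is_weak_thread :: "('a::wellorder \<Rightarrow> 'a set set) \<Rightarrow> 'a set \<Rightarrow> bool" where
  "is_weak_thread CC E \<longleftrightarrow> club E \<and> (\<forall>a\<in>acc E. \<exists>C\<in>CC a. E \<inter> {..<a} \<subseteq> C)"

end

theory Submission
  imports Defs
begin

text \<open>For a limit point a of the weak thread E let covers(a) be the members of CC(a)
  containing E below a, and extendable(a) those that extend to a member of covers(a') at
  every larger limit point a'.  Coherence makes both families closed under restriction, and
  since they have fewer than k < lambda members, regularity of lambda shows that each
  extendable(a) is nonempty and that every member of it extends into every later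
  extendable(a').  Two distinct members of some extendable(d) first differ at a splitting
  point; below each d there are fewer than lambda splitting points, so by regularity all of
  them lie below some limit point b.  Past b a member of extendable(b) therefore has exactly
  one extension into each later extendable(a), and the union of these extensions is a
  thread.\<close>

lemma Int_lessThan_lessThan_absorb:
  fixes a g :: "'a::linorder"
  assumes "a \<le> g"
  shows "X \<inter> {..<g} \<inter> {..<a} = X \<inter> {..<a}"
  using assms by (auto dest: less_le_trans)

definition first_diff :: "'a::wellorder set \<Rightarrow> 'a set \<Rightarrow> 'a" where
  "first_diff X Y = (LEAST x. x \<in> (X - Y) \<union> (Y - X))"

lemma first_diff_mem: "X \<noteq> Y \<Longrightarrow> first_diff X Y \<in> (X - Y) \<union> (Y - X)"
  unfolding first_diff_def by (rule LeastI_ex) blast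

lemma first_diff_le: "x \<in> (X - Y) \<union> (Y - X) \<Longrightarrow> first_diff X Y \<le> x"
  unfolding first_diff_def by (rule Least_le)

lemma first_diff_Int_lessThan:
  assumes "X \<inter> {..<b} \<noteq> Y \<inter> {..<b}"
  shows "first_diff (X \<inter> {..<b}) (Y \<inter> {..<b}) = first_diff X Y"
proof -
  let ?s = "first_diff (X \<inter> {..<b}) (Y \<inter> {..<b})"
  have s: "?s \<in> (X - Y) \<union> (Y - X)" "?s < b"
    using first_diff_mem[OF assms] by auto
  show ?thesis
    unfolding first_diff_def[of X Y]
  proof (rule Least_equality[symmetric])
    show "?s \<in> (X - Y) \<union> (Y - X)" by (fact s(1))
    show "?s \<le> y" if "y \<in> (X - Y) \<union> (Y - X)" for y
    proof (cases "y < b")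
      case True
      then show ?thesis using that by (intro first_diff_le) auto
    next
      case False
      then show ?thesis using s(2) by simp
    qed
  qed
qed

lemma first_diff_less_iff:
  assumes "X \<noteq> Y"
  shows "first_diff X Y < b \<longleftrightarrow> X \<inter> {..<b} \<noteq> Y \<inter> {..<b}"
proof
  assume "first_diff X Y < b"
  then show "X \<inter> {..<b} \<noteq> Y \<inter> {..<b}" using first_diff_mem[OF assms] by blast
next
  assume ne: "X \<inter> {..<b} \<noteq> Y \<inter> {..<b}"
  have "first_diff (X \<inter> {..<b}) (Y \<inter> {..<b}) < b" using first_diff_mem[OF ne] by blast
  then show "first_diff X Y < b" by (simp only: first_diff_Int_lessThan[OF ne])
qed

lemma times_self_lesspoll:
  assumes "X \<prec> B" "infinite B"
  shows "X \<times> X \<prec> B"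
proof (cases "finite X")
  case True
  then show ?thesis using assms(2) by (intro finite_lesspoll_infinite) simp_all
next
  case False
  then have "X \<times> X \<approx> X"
    using card_of_Times_same_infinite[OF False] eqpoll_iff_card_of_ordIso by blast
  then show ?thesis using assms(1) by (rule eq_lesspoll_trans)
qed

lemma uncountable_infinite_lessThan:
  assumes "uncountable (UNIV :: 'a::wellorder set)"
  shows "\<exists>m. k \<le> m \<and> infinite {..<m::'a}"
proof -
  have "\<not> (\<forall>x::'a. finite {..<x})"
  proof
    assume fin: "\<forall>x::'a. finite {..<x}"
    have "inj (\<lambda>x::'a. card {..<x})"
    proof (rule linorder_injI)
      fix x y :: 'a assume "x < y"
      then have "{..<x} \<subset> {..<y}" by auto
      then show "card {..<x} \<noteq> card {..<y}" using psubset_card_mono fin by (metis less_irrefl)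
    qed
    then have "countable (UNIV :: 'a set)" by (rule countableI)
    with assms show False by blast
  qed
  then obtain m0 :: 'a where "infinite {..<m0}" by blast
  moreover have "{..<m0} \<subseteq> {..<max k m0}" by auto
  ultimately have "infinite {..<max k m0}" by (metis infinite_super)
  then show ?thesis by (intro exI[of _ "max k m0"]) simp
qed

lemma regular_bounded:
  fixes X :: "'a::wellorder set"
  assumes "regular_uncountable_cardinal_type TYPE('a)" and "X \<prec> (UNIV :: 'a set)"
  shows "\<exists>b. \<forall>x\<in>X. x < b"
proof (rule ccontr)
  assume "\<not> ?thesis"
  then have "\<forall>g. \<exists>x\<in>X. g \<le> x" by (meson leI)
  moreover have "\<forall>X::'a set. (\<forall>g. \<exists>x\<in>X. g \<le> x) \<longrightarrow> X \<approx> (UNIV :: 'a set)"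
    using assms(1) unfolding regular_uncountable_cardinal_type_def by (elim conjE)
  ultimately have "X \<approx> (UNIV :: 'a set)" by simp
  with assms(2) show False unfolding lesspoll_def by (elim conjE notE)
qed

lemma regular_lessThan_lesspoll:
  assumes "regular_uncountable_cardinal_type TYPE('a::wellorder)"
  shows "{..<a::'a} \<prec> (UNIV :: 'a set)"
proof -
  have "\<forall>a::'a. {..<a} \<prec> (UNIV :: 'a set)"
    using assms unfolding regular_uncountable_cardinal_type_def by (elim conjE)
  then show ?thesis by (rule spec)
qed

lemma regular_countable_bounded:
  fixes X :: "'a::wellorder set"
  assumes "regular_uncountable_cardinal_type TYPE('a)" and "countable X"
  shows "\<exists>b. \<forall>x\<in>X. x < b"
proof (rule regular_bounded[OF assms(1)])
  have "uncountable (UNIV :: 'a set)"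
    using assms(1) unfolding regular_uncountable_cardinal_type_def by (elim conjE)
  then have "\<not> X \<approx> (UNIV :: 'a set)"
    using countable_eqpoll[OF assms(2)] eqpoll_sym by metis
  then show "X \<prec> (UNIV :: 'a set)" unfolding lesspoll_def by (simp add: subset_imp_lepoll)
qed

lemma regular_gt_ex:
  fixes x :: "'a::wellorder"
  assumes "regular_uncountable_cardinal_type TYPE('a)"
  shows "\<exists>y. x < y"
  using regular_countable_bounded[OF assms, of "{x}"] by auto

lemma acc_mono_lessThan:
  assumes "b \<in> acc E" and "E \<inter> {..<b} \<subseteq> X" and "\<exists>x\<in>X. b \<le> x"
  shows "b \<in> acc X"
  unfolding acc_def is_sup_def
proof (intro CollectI conjI ballI allI impI)
  show "\<exists>x\<in>X. b \<le> x" by (fact assms(3))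
  show "x \<le> b" if "x \<in> X \<inter> {..<b}" for x using that by auto
  show "b \<le> y" if "\<forall>x\<in>X \<inter> {..<b}. x \<le> y" for y
    using that assms(1,2) unfolding acc_def is_sup_def by blast
qed

text \<open>The supremum of an increasing omega-sequence in E is a limit point of E; it exists
  because lambda has uncountable cofinality.\<close>
lemma regular_acc_unbounded:
  fixes E :: "'a::wellorder set"
  assumes reg: "regular_uncountable_cardinal_type TYPE('a)"
    and unbounded: "\<And>g. \<exists>d\<in>E. g < d"
  shows "\<exists>a\<in>acc E. g < a"
proof -
  have "\<forall>x. \<exists>y. y \<in> E \<and> x < y" using unbounded by blast
  then obtain next_in where next_in: "\<And>x. next_in x \<in> E \<and> x < next_in x"
    by (auto simp: choice_iff)
  define e where "e = rec_nat (next_in g) (\<lambda>_. next_in)"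
  have e_mem: "e n \<in> E" and e_less: "e n < e (Suc n)" for n
    by (cases n) (simp_all add: e_def next_in)
  obtain b where "\<forall>x\<in>range e. x < b"
    using regular_countable_bounded[OF reg, of "range e"] by blast
  then have ex_bound: "\<exists>y. \<forall>n. e n \<le> y" by (meson rangeI less_imp_le)
  define s where "s = (LEAST y. \<forall>n. e n \<le> y)"
  have e_le_s: "e n \<le> s" for n
    using LeastI_ex[OF ex_bound] unfolding s_def by (rule spec)
  have s_least: "s \<le> y" if "\<forall>n. e n \<le> y" for y
    unfolding s_def by (rule Least_le) (rule that)
  have e_less_s: "e n < s" for n using e_less[of n] e_le_s[of "Suc n"] by (rule less_le_trans)
  have "s \<in> acc E"
    unfolding acc_def is_sup_def
  proof (intro CollectI conjI ballI allI impI)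
    show "\<exists>a\<in>E. s \<le> a" using unbounded less_imp_le by blast
    show "x \<le> s" if "x \<in> E \<inter> {..<s}" for x using that by auto
    show "s \<le> y" if "\<forall>x\<in>E \<inter> {..<s}. x \<le> y" for y
    proof (rule s_least, intro allI)
      fix n show "e n \<le> y" using that e_mem[of n] e_less_s[of n] by blast
    qed
  qed
  moreover have "g < e 0" by (simp add: e_def next_in)
  then have "g < s" using e_less_s[of 0] by (rule less_trans)
  ultimately show ?thesis by blast
qed

lemma coherent_seq_club_in:
  assumes "coherent_seq CC k" and "C \<in> CC a"
  shows "club_in C a"
proof -
  have "\<forall>a. \<forall>C\<in>CC a. club_in C a"
    using assms(1) unfolding coherent_seq_def by (elim conjE) blast
  then show ?thesis using assms(2) by blast
qed

lemma coherent_seq_lesspoll: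
  assumes "coherent_seq CC k"
  shows "CC a \<prec> {..<k}"
proof -
  have "\<forall>a. CC a \<prec> {..<k}"
    using assms unfolding coherent_seq_def by (elim conjE) blast
  then show ?thesis by (rule spec)
qed

lemma coherent_seq_restrict:
  assumes "coherent_seq CC k" and "C \<in> CC b" and "a \<in> acc C"
  shows "C \<inter> {..<a} \<in> CC a"
proof -
  have "\<forall>b. \<forall>C\<in>CC b. \<forall>a\<in>acc C. C \<inter> {..<a} \<in> CC a"
    using assms(1) unfolding coherent_seq_def by (elim conjE)
  then show ?thesis using assms(2,3) by blast
qed

lemma thread_if_cofinal_levels:
  assumes coh: "coherent_seq CC k" and levels: "\<And>x. \<exists>g>x. D \<inter> {..<g} \<in> CC g"
  shows "is_thread CC D"
proof -
  have level_above: "\<exists>g. x < g \<and> D \<inter> {..<g} \<in> CC g \<and> club_in (D \<inter> {..<g}) g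
      \<and> D \<inter> {..<g} \<inter> {..<x} = D \<inter> {..<x}" for x
  proof -
    obtain g where g: "x < g" "D \<inter> {..<g} \<in> CC g" using levels by blast
    moreover have "club_in (D \<inter> {..<g}) g" using coherent_seq_club_in[OF coh g(2)] .
    moreover have "D \<inter> {..<g} \<inter> {..<x} = D \<inter> {..<x}"
      using g(1) by (simp add: Int_lessThan_lessThan_absorb)
    ultimately show ?thesis by blast
  qed
  show ?thesis
    unfolding is_thread_def club_def
  proof (intro conjI allI impI ballI)
    fix x
    obtain g where "x < g" "club_in (D \<inter> {..<g}) g" using level_above by blast
    then show "\<exists>d\<in>D. x \<le> d" unfolding club_in_def by blast
  next
    fix a assume a: "D \<inter> {..<a} \<noteq> {} \<and> is_sup (D \<inter> {..<a}) a"
    obtain g where g: "a < g" "club_in (D \<inter> {..<g}) g"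
      and restr: "D \<inter> {..<g} \<inter> {..<a} = D \<inter> {..<a}"
      using level_above by blast
    then have "a \<in> D \<inter> {..<g}" using a unfolding club_in_def by simp
    then show "a \<in> D" by blast
  next
    fix a assume a: "a \<in> acc D"
    obtain g where g: "a < g" "D \<inter> {..<g} \<in> CC g" "club_in (D \<inter> {..<g}) g"
      and restr: "D \<inter> {..<g} \<inter> {..<a} = D \<inter> {..<a}"
      using level_above by blast
    have "a \<in> acc (D \<inter> {..<g})"
    proof (rule acc_mono_lessThan[OF a])
      show "D \<inter> {..<a} \<subseteq> D \<inter> {..<g}" using g(1) by auto
      show "\<exists>x\<in>D \<inter> {..<g}. a \<le> x" using g(1,3) unfolding club_in_def by blast
    qed
    then have "D \<inter> {..<g} \<inter> {..<a} \<in> CC a" by (rule coherent_seq_restrict[OF coh g(2)])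
    then show "D \<inter> {..<a} \<in> CC a" by (simp only: restr)
  qed
qed

locale weakly_threaded_seq =
  fixes CC :: "'a::wellorder \<Rightarrow> 'a set set" and k :: 'a and E :: "'a set"
  assumes regular: "regular_uncountable_cardinal_type TYPE('a)"
    and coherent: "coherent_seq CC k"
    and weak_thread: "is_weak_thread CC E"
begin

lemma acc_E_unbounded: "\<exists>a\<in>acc E. g < a"
proof (rule regular_acc_unbounded[OF regular])
  fix g :: 'a
  obtain x where "g < x" using regular_gt_ex[OF regular] by blast
  moreover have "\<forall>g. \<exists>d\<in>E. g \<le> d"
    using weak_thread unfolding is_weak_thread_def club_def by (elim conjE)
  then obtain d where "d \<in> E" "x \<le> d" by blast
  ultimately show "\<exists>d\<in>E. g < d" using less_le_trans by blast
qed

lemma lepoll_CC_bounded: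
  fixes X :: "'a set"
  assumes "X \<lesssim> CC a"
  shows "\<exists>b. \<forall>x\<in>X. x < b"
proof -
  have "CC a \<prec> (UNIV :: 'a set)"
    using coherent_seq_lesspoll[OF coherent] regular_lessThan_lesspoll[OF regular]
    by (rule lesspoll_trans)
  with assms have "X \<prec> (UNIV :: 'a set)" by (rule lesspoll_trans1)
  then show ?thesis by (rule regular_bounded[OF regular])
qed

definition covers :: "'a \<Rightarrow> 'a set set" where
  "covers a = {C \<in> CC a. E \<inter> {..<a} \<subseteq> C}"

lemma covers_nonempty:
  assumes "a \<in> acc E"
  shows "covers a \<noteq> {}"
proof -
  have "\<forall>a\<in>acc E. \<exists>C\<in>CC a. E \<inter> {..<a} \<subseteq> C"
    using weak_thread unfolding is_weak_thread_def by (elim conjE)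
  then show ?thesis using assms unfolding covers_def by blast
qed

lemma covers_subset_lessThan:
  assumes "X \<in> covers a"
  shows "X \<subseteq> {..<a}"
proof -
  have "club_in X a" using assms coherent_seq_club_in[OF coherent] unfolding covers_def by blast
  then show ?thesis unfolding club_in_def by (elim conjE)
qed

lemma covers_restrict:
  assumes "b \<in> acc E" "b \<le> a" "X \<in> covers a"
  shows "X \<inter> {..<b} \<in> covers b"
proof (cases "b = a")
  case True
  then show ?thesis using assms(3) covers_subset_lessThan by (simp add: Int_absorb2)
next
  case False
  with assms(2) have "b < a" by simp
  have X: "X \<in> CC a" "E \<inter> {..<a} \<subseteq> X" using assms(3) unfolding covers_def by blast+
  have "b \<in> acc X"
  proof (rule acc_mono_lessThan[OF assms(1)])
    show "E \<inter> {..<b} \<subseteq> X" using X(2) \<open>b < a\<close> by auto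
    show "\<exists>x\<in>X. b \<le> x"
      using coherent_seq_club_in[OF coherent X(1)] \<open>b < a\<close> unfolding club_in_def by blast
  qed
  then have "X \<inter> {..<b} \<in> CC b" by (rule coherent_seq_restrict[OF coherent X(1)])
  moreover have "E \<inter> {..<b} \<subseteq> X \<inter> {..<b}" using X(2) \<open>b < a\<close> by auto
  ultimately show ?thesis unfolding covers_def by blast
qed

definition extendable :: "'a \<Rightarrow> 'a set set" where
  "extendable b = {X \<in> covers b. \<forall>a\<in>acc E. b < a \<longrightarrow> (\<exists>Y\<in>covers a. Y \<inter> {..<b} = X)}"

lemma extendable_lesspoll: "extendable a \<prec> {..<k}"
proof -
  have "extendable a \<lesssim> CC a"
    unfolding extendable_def covers_def by (rule subset_imp_lepoll) blast
  then show ?thesis using coherent_seq_lesspoll[OF coherent] by (rule lesspoll_trans1)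
qed

text \<open>If no member of P were extendable, each would fail at some larger limit point of E;
  these fewer than lambda points are bounded, and a cover above the bound restricts back
  into P.\<close>
lemma extendable_Int_nonempty:
  assumes P: "P \<subseteq> covers b"
    and extends: "\<And>a. a \<in> acc E \<Longrightarrow> b < a \<Longrightarrow> \<exists>Y\<in>covers a. Y \<inter> {..<b} \<in> P"
  shows "P \<inter> extendable b \<noteq> {}"
proof
  assume "P \<inter> extendable b = {}"
  then have "\<forall>Z\<in>P. \<exists>a. a \<in> acc E \<and> b < a \<and> \<not> (\<exists>Y\<in>covers a. Y \<inter> {..<b} = Z)"
    using P unfolding extendable_def by blast
  then obtain f where f: "\<forall>Z\<in>P.
      f Z \<in> acc E \<and> b < f Z \<and> \<not> (\<exists>Y\<in>covers (f Z). Y \<inter> {..<b} = Z)"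
    by (elim bchoice[elim_format] exE)
  have "P \<subseteq> CC b" using P unfolding covers_def by blast
  then have "f ` P \<lesssim> CC b" by (rule lepoll_trans[OF image_lepoll subset_imp_lepoll])
  then obtain c where c: "\<forall>x\<in>f ` P. x < c" using lepoll_CC_bounded by blast
  obtain a where a: "a \<in> acc E" "max b c < a" using acc_E_unbounded by blast
  then obtain Y where Y: "Y \<in> covers a" "Y \<inter> {..<b} \<in> P" using extends by auto
  define Z where "Z = Y \<inter> {..<b}"
  have fZ: "f Z \<in> acc E" "b < f Z" "f Z < a"
    using f c a(2) Y(2) unfolding Z_def by auto
  have "Y \<inter> {..<f Z} \<in> covers (f Z)"
    using covers_restrict[OF fZ(1) less_imp_le[OF fZ(3)] Y(1)] .
  moreover have "Y \<inter> {..<f Z} \<inter> {..<b} = Z"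
    using fZ(2) unfolding Z_def by (simp add: Int_lessThan_lessThan_absorb)
  ultimately show False using f Y(2) unfolding Z_def by blast
qed

lemma extendable_nonempty:
  assumes "b \<in> acc E"
  shows "extendable b \<noteq> {}"
proof -
  have "covers b \<inter> extendable b \<noteq> {}"
  proof (rule extendable_Int_nonempty[OF order.refl])
    fix a assume "a \<in> acc E" "b < a"
    then obtain Y where "Y \<in> covers a" using covers_nonempty by blast
    moreover have "Y \<inter> {..<b} \<in> covers b"
      using covers_restrict[OF assms less_imp_le[OF \<open>b < a\<close>] \<open>Y \<in> covers a\<close>] .
    ultimately show "\<exists>Y\<in>covers a. Y \<inter> {..<b} \<in> covers b" by blast
  qed
  then show ?thesis by blast
qed

lemma extendable_extend:
  assumes "g \<in> acc E" "b < g" "X \<in> extendable b"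
  shows "\<exists>Y\<in>extendable g. Y \<inter> {..<b} = X"
proof -
  let ?P = "{Z \<in> covers g. Z \<inter> {..<b} = X}"
  have "?P \<inter> extendable g \<noteq> {}"
  proof (rule extendable_Int_nonempty)
    show "?P \<subseteq> covers g" by blast
  next
    fix a assume a: "a \<in> acc E" "g < a"
    have "\<forall>a\<in>acc E. b < a \<longrightarrow> (\<exists>Y\<in>covers a. Y \<inter> {..<b} = X)"
      using assms(3) unfolding extendable_def by blast
    then obtain W where W: "W \<in> covers a" "W \<inter> {..<b} = X"
      using a assms(2) less_trans by blast
    have "W \<inter> {..<g} \<in> covers g" using covers_restrict[OF assms(1) less_imp_le[OF a(2)] W(1)] .
    moreover have "W \<inter> {..<g} \<inter> {..<b} = X"
      using W(2) assms(2) by (simp add: Int_lessThan_lessThan_absorb)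
    ultimately show "\<exists>Y\<in>covers a. Y \<inter> {..<g} \<in> ?P" using W(1) by blast
  qed
  then show ?thesis by blast
qed

lemma extendable_restrict:
  assumes "b \<in> acc E" "b \<le> g" "Y \<in> extendable g"
  shows "Y \<inter> {..<b} \<in> extendable b"
proof -
  have Y: "Y \<in> covers g" "\<forall>a\<in>acc E. g < a \<longrightarrow> (\<exists>W\<in>covers a. W \<inter> {..<g} = Y)"
    using assms(3) unfolding extendable_def by blast+
  have "\<exists>W\<in>covers a. W \<inter> {..<b} = Y \<inter> {..<b}" if a: "a \<in> acc E" "b < a" for a
  proof (cases "g < a")
    case True
    then obtain W where "W \<in> covers a" "W \<inter> {..<g} = Y" using Y(2) a(1) by blast
    moreover have "W \<inter> {..<g} \<inter> {..<b} = W \<inter> {..<b}"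
      using assms(2) by (rule Int_lessThan_lessThan_absorb)
    ultimately show ?thesis by auto
  next
    case False
    have "Y \<inter> {..<a} \<in> covers a" using covers_restrict[OF a(1) leI[OF False] Y(1)] .
    moreover have "Y \<inter> {..<a} \<inter> {..<b} = Y \<inter> {..<b}"
      using a(2) by (simp add: Int_lessThan_lessThan_absorb)
    ultimately show ?thesis by auto
  qed
  moreover have "Y \<inter> {..<b} \<in> covers b" using covers_restrict assms(1,2) Y(1) .
  ultimately show ?thesis unfolding extendable_def by blast
qed

definition splitting_points :: "'a set" where
  "splitting_points = {first_diff X Y | X Y.
     \<exists>d\<in>acc E. X \<in> extendable d \<and> Y \<in> extendable d \<and> X \<noteq> Y}"

lemma splitting_points_below:
  assumes d: "d \<in> acc E"
  shows "splitting_points \<inter> {..<d} \<subseteq> (\<lambda>(X, Y). first_diff X Y) ` (extendable d \<times> extendable d)"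
proof
  fix s assume "s \<in> splitting_points \<inter> {..<d}"
  then obtain X Y d' where s: "s = first_diff X Y" "s < d" "d' \<in> acc E"
    and XY: "X \<in> extendable d'" "Y \<in> extendable d'" "X \<noteq> Y"
    unfolding splitting_points_def by blast
  show "s \<in> (\<lambda>(X, Y). first_diff X Y) ` (extendable d \<times> extendable d)"
  proof (cases "d \<le> d'")
    case True
    have "X \<inter> {..<d} \<noteq> Y \<inter> {..<d}" using first_diff_less_iff[OF XY(3)] s by simp
    then have "first_diff (X \<inter> {..<d}) (Y \<inter> {..<d}) = s"
      using s(1) by (simp add: first_diff_Int_lessThan)
    moreover have "(X \<inter> {..<d}, Y \<inter> {..<d}) \<in> extendable d \<times> extendable d"
      using extendable_restrict[OF d True] XY by simp
    ultimately show ?thesis by (auto intro!: image_eqI[where x = "(X \<inter> {..<d}, Y \<inter> {..<d})"])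
  next
    case False
    then have "d' < d" by simp
    then obtain X' Y' where X': "X' \<in> extendable d" "X' \<inter> {..<d'} = X"
      and Y': "Y' \<in> extendable d" "Y' \<inter> {..<d'} = Y"
      using extendable_extend[OF d] XY(1,2) by meson
    then have "first_diff X' Y' = s"
      using XY(3) s(1) first_diff_Int_lessThan[of X' d' Y'] by simp
    moreover have "(X', Y') \<in> extendable d \<times> extendable d" using X' Y' by simp
    ultimately show ?thesis by (auto intro!: image_eqI[where x = "(X', Y')"])
  qed
qed

text \<open>Below any d there are at most |extendable d|^2 < |k| splitting points, while an unbounded
  set of size lambda would contain an initial segment of size at least k below some d.\<close>
lemma splitting_points_bounded: "\<exists>b. \<forall>s\<in>splitting_points. s < b"
proof -
  have "\<not> (UNIV :: 'a set) \<approx> splitting_points"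
  proof
    assume "(UNIV :: 'a set) \<approx> splitting_points"
    then obtain h where h: "bij_betw h (UNIV :: 'a set) splitting_points"
      unfolding eqpoll_def by blast
    have "uncountable (UNIV :: 'a set)"
      using regular unfolding regular_uncountable_cardinal_type_def by (elim conjE)
    then obtain m where m: "k \<le> m" "infinite {..<m}" using uncountable_infinite_lessThan by blast
    have "h ` {..<m} \<prec> (UNIV :: 'a set)"
      using image_lepoll regular_lessThan_lesspoll[OF regular] by (rule lesspoll_trans1)
    then obtain c where c: "\<forall>x\<in>h ` {..<m}. x < c" using regular_bounded[OF regular] by blast
    obtain d where d: "d \<in> acc E" "c < d" using acc_E_unbounded by blast
    have "h ` {..<m} \<subseteq> splitting_points \<inter> {..<d}"
      using bij_betwE[OF h] c d(2) less_trans by blast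
    also have "\<dots> \<subseteq> (\<lambda>(X, Y). first_diff X Y) ` (extendable d \<times> extendable d)"
      by (rule splitting_points_below[OF d(1)])
    finally have "h ` {..<m} \<lesssim> extendable d \<times> extendable d" by (rule subset_image_lepoll)
    moreover have "inj_on h {..<m}" using bij_betw_imp_inj_on[OF h] by (rule inj_on_subset) simp
    ultimately have "{..<m} \<lesssim> extendable d \<times> extendable d" by simp
    moreover have "{..<k} \<lesssim> {..<m}" using m(1) by (intro subset_imp_lepoll) auto
    with extendable_lesspoll have "extendable d \<prec> {..<m}" by (rule lesspoll_trans2)
    then have "extendable d \<times> extendable d \<prec> {..<m}" using m(2) by (rule times_self_lesspoll)
    ultimately show False using lesspoll_trans1 by blast
  qed
  then have "splitting_points \<prec> (UNIV :: 'a set)"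
    unfolding lesspoll_def using eqpoll_sym by (blast intro: subset_imp_lepoll)
  then show ?thesis by (rule regular_bounded[OF regular])
qed

lemma extendable_eqI:
  assumes "\<forall>s\<in>splitting_points. s < b" "g \<in> acc E" "Y \<in> extendable g" "Y' \<in> extendable g"
    and "Y \<inter> {..<b} = Y' \<inter> {..<b}"
  shows "Y = Y'"
proof (rule ccontr)
  assume "Y \<noteq> Y'"
  then have "first_diff Y Y' \<in> splitting_points" unfolding splitting_points_def using assms(2-4) by blast
  then have "first_diff Y Y' < b" using assms(1) by blast
  with \<open>Y \<noteq> Y'\<close> assms(5) show False using first_diff_less_iff by blast
qed

definition branch :: "'a \<Rightarrow> 'a set \<Rightarrow> 'a set" where
  "branch b X = \<Union>{Y. \<exists>g\<in>acc E. b \<le> g \<and> Y \<in> extendable g \<and> Y \<inter> {..<b} = X}"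

lemma branch_Int_lessThan:
  assumes bound: "\<forall>s\<in>splitting_points. s < b"
    and g: "g \<in> acc E" "b \<le> g" and Y: "Y \<in> extendable g" "Y \<inter> {..<b} = X"
  shows "branch b X \<inter> {..<g} = Y"
proof -
  have coincide: "Y2 \<inter> {..<g1} = Y1"
    if "g1 \<in> acc E" "b \<le> g1" "Y1 \<in> extendable g1" "Y1 \<inter> {..<b} = X"
      and "g1 \<le> g2" "Y2 \<in> extendable g2" "Y2 \<inter> {..<b} = X" for g1 Y1 g2 Y2
  proof (rule extendable_eqI[OF bound that(1) _ that(3)])
    show "Y2 \<inter> {..<g1} \<in> extendable g1" using extendable_restrict that by blast
    show "Y2 \<inter> {..<g1} \<inter> {..<b} = Y1 \<inter> {..<b}"
      using that(2,4,7) by (simp add: Int_lessThan_lessThan_absorb)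
  qed
  show ?thesis
  proof
    show "Y \<subseteq> branch b X \<inter> {..<g}"
      unfolding branch_def using g Y covers_subset_lessThan extendable_def by blast
  next
    show "branch b X \<inter> {..<g} \<subseteq> Y"
    proof
      fix x assume "x \<in> branch b X \<inter> {..<g}"
      then obtain g' Y' where x: "x \<in> Y'" "x < g"
        and Y': "g' \<in> acc E" "b \<le> g'" "Y' \<in> extendable g'" "Y' \<inter> {..<b} = X"
        unfolding branch_def by blast
      show "x \<in> Y"
      proof (cases "g \<le> g'")
        case True
        then show ?thesis using coincide[OF g Y True Y'(3,4)] x by blast
      next
        case False
        then have "Y \<inter> {..<g'} = Y'" using coincide[OF Y' _ Y] by simp
        then show ?thesis using x(1) by blast
      qed
    qed
  qed
qed

lemma branch_is_thread:
  assumes bound: "\<forall>s\<in>splitting_points. s < b"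
    and b: "b \<in> acc E" and X: "X \<in> extendable b"
  shows "is_thread CC (branch b X)"
proof (rule thread_if_cofinal_levels[OF coherent])
  fix x
  obtain g where g: "g \<in> acc E" "max x b < g" using acc_E_unbounded by blast
  then obtain Y where Y: "Y \<in> extendable g" "Y \<inter> {..<b} = X"
    using extendable_extend[OF g(1) _ X] by auto
  have "b \<le> g" using g(2) by (simp add: less_imp_le)
  then have "branch b X \<inter> {..<g} = Y" using branch_Int_lessThan[OF bound g(1) _ Y] by blast
  moreover have "Y \<in> CC g" using Y(1) unfolding extendable_def covers_def by blast
  ultimately show "\<exists>g>x. branch b X \<inter> {..<g} \<in> CC g" using g(2) by auto
qed

lemma thread_exists: "\<exists>D. is_thread CC D"
proof -
  obtain b' where "\<forall>s\<in>splitting_points. s < b'" using splitting_points_bounded by blast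
  moreover obtain b where b: "b \<in> acc E" "b' < b" using acc_E_unbounded by blast
  ultimately have bound: "\<forall>s\<in>splitting_points. s < b" using less_trans by blast
  obtain X where "X \<in> extendable b" using extendable_nonempty[OF b(1)] by blast
  then show ?thesis using branch_is_thread[OF bound b(1)] by blast
qed

end

theorem lemma2p3:
  fixes CC :: "'a::wellorder \<Rightarrow> 'a set set" and k :: 'a
  assumes "regular_uncountable_cardinal_type TYPE('a)"
    and "is_cardinal k"
    and "coherent_seq CC k"
    and "\<exists>E. is_weak_thread CC E"
  shows "\<exists>D. is_thread CC D"
proof -
  obtain E where "is_weak_thread CC E" using assms(4) by blast
  with assms(1,3) interpret weakly_threaded_seq CC k E by unfold_locales
  show ?thesis by (rule thread_exists)
qed

end
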